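(* Let $n$ be a positive integer, $P = \mathrm{COR}(n)$ and $Q = Q(n)$. Then there exists a spectrahedron $S \subseteq \mathbb{R}^{n\times n}$ with $P \subseteq S \subseteq Q$ and $\operatorname{xc}_{SDP}(S) \leqslant n+1$.
   Context: $\mathrm{COR}(n) = \mathrm{conv}\{bb^\intercal \mid b\in\{0,1\}^n\}$ and $Q(n) = \{x\in\mathbb{R}^{n\times n}\mid \langle 2\,\mathrm{diag}(a)-aa^\intercal, x\rangle \leqslant 1\ \forall a\in\{0,1\}^n\}$, with $\langle\cdot,\cdot\rangle$ the Frobenius inner product. A semidefinite EF of a convex set $S\subseteq\mathbb{R}^d$ is a linear system $\langle E_i, x\rangle + \langle F_i, Y\rangle = g_i$ ($i\in[k]$), $Y \in \mathcal{S}^r_+$ (the cone of $r\times r$ symmetric positive semidefinite matrices), with $E_i\in\mathbb{R}^d$ and $F_i$ symmetric $r\times r$, such that $x\in S$ iff there exists $Y\in\mathcal{S}^r_+$ satisfying the system; its size is $r$. A spectrahedron is a convex set admitting a semidefinite EF, and $\operatorname{xc}_{SDP}(S)$ is the minimum size of a semidefinite EF of $S$. *)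

theory Defs
  imports "HOL-Analysis.Analysis"
begin

text \<open>Matrices in R^{n x n} are modelled as real^'n^'n, with n = CARD('n).
  Positive semidefinite r x r matrices (r varying) are modelled as functions
  nat => nat => real, of which only the entries with indices < r matter.\<close>

definition frob :: "real^'n^'n \<Rightarrow> real^'n^'n \<Rightarrow> real" where
  "frob A X = (\<Sum>i\<in>UNIV. \<Sum>j\<in>UNIV. A$i$j * X$i$j)"

definition frob_r :: "nat \<Rightarrow> (nat \<Rightarrow> nat \<Rightarrow> real) \<Rightarrow> (nat \<Rightarrow> nat \<Rightarrow> real) \<Rightarrow> real" where
  "frob_r r F Y = (\<Sum>i<r. \<Sum>j<r. F i j * Y i j)"

definition symm_r :: "nat \<Rightarrow> (nat \<Rightarrow> nat \<Rightarrow> real) \<Rightarrow> bool" where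
  "symm_r r Y \<longleftrightarrow> (\<forall>i<r. \<forall>j<r. Y i j = Y j i)"

definition psd_r :: "nat \<Rightarrow> (nat \<Rightarrow> nat \<Rightarrow> real) \<Rightarrow> bool" where
  "psd_r r Y \<longleftrightarrow> symm_r r Y \<and>
     (\<forall>v :: nat \<Rightarrow> real. 0 \<le> (\<Sum>i<r. \<Sum>j<r. v i * Y i j * v j))"

definition binvecs :: "('n \<Rightarrow> real) set" where
  "binvecs = {b. \<forall>i. b i \<in> {0, 1}}"

definition COR :: "(real^'n^'n) set" where
  "COR = convex hull {(\<chi> i j. b i * b j) | b. b \<in> binvecs}"

definition Qset :: "(real^'n^'n) set" where
  "Qset = {x. \<forall>a\<in>binvecs.
      frob (\<chi> i j. (if i = j then 2 * a i else 0) - a i * a j) x \<le> 1}"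

definition sdp_ef :: "(real^'n^'n) set \<Rightarrow> nat \<Rightarrow> bool" where
  "sdp_ef S r \<longleftrightarrow> (\<exists>(k::nat) (E :: nat \<Rightarrow> real^'n^'n) (F :: nat \<Rightarrow> nat \<Rightarrow> nat \<Rightarrow> real) (g :: nat \<Rightarrow> real).
      (\<forall>i<k. symm_r r (F i)) \<and>
      (\<forall>x. x \<in> S \<longleftrightarrow> (\<exists>Y. psd_r r Y \<and> (\<forall>i<k. frob (E i) x + frob_r r (F i) Y = g i))))"

definition spectrahedron :: "(real^'n^'n) set \<Rightarrow> bool" where
  "spectrahedron S \<longleftrightarrow> (\<exists>r. sdp_ef S r)"

definition xc_sdp :: "(real^'n^'n) set \<Rightarrow> nat" where
  "xc_sdp S = (LEAST r. sdp_ef S r)"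

end

theory Submission
  imports Defs
begin

text \<open>With an enumeration \<open>g\<close> of the index set, take for \<open>S\<close> the set of \<open>x\<close> whose
  \<open>(n+1) \<times> (n+1)\<close> moment matrix \<open>[[1, diag x\<^sup>T], [diag x, (x + x\<^sup>T)/2]]\<close> is positive
  semidefinite. Its entries are affine in \<open>x\<close>, so \<open>S\<close> has a semidefinite extended formulation
  of size \<open>n+1\<close> and is convex. For binary \<open>b\<close> the moment matrix of \<open>bb\<^sup>T\<close> is the rank-one
  matrix \<open>(1,b)(1,b)\<^sup>T\<close>, so \<open>COR \<subseteq> S\<close>; evaluating the quadratic form of the moment matrix
  of \<open>x \<in> S\<close> at \<open>(1, -a)\<close> gives exactly the inequality of \<open>Q\<close> for \<open>a\<close>.\<close>

lemma frob_eq_inner: "frob A x = A \<bullet> x"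
  by (simp add: frob_def inner_vec_def)

lemma sum_sum_if_eq_pair:
  fixes c :: real and p q r :: nat
  assumes "p < r" "q < r"
  shows "(\<Sum>i<r. \<Sum>j<r. if i = p \<and> j = q then c else 0) = c"
proof -
  have "(\<Sum>j<r. if i = p \<and> j = q then c else 0) = (if i = p then c else 0)" for i
    using assms(2) by (cases "i = p") simp_all
  then show ?thesis
    using assms(1) by simp
qed

definition sym_unit :: "nat \<Rightarrow> nat \<Rightarrow> nat \<Rightarrow> nat \<Rightarrow> real" where
  "sym_unit p q i j = (if i = p \<and> j = q then 1/2 else 0) + (if i = q \<and> j = p then 1/2 else 0)"

lemma symm_r_sym_unit: "symm_r r (sym_unit p q)"
  unfolding symm_r_def sym_unit_def by (simp add: conj_commute add.commute)

lemma frob_r_sym_unit: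
  assumes "symm_r r Y" "p < r" "q < r"
  shows "frob_r r (sym_unit p q) Y = Y p q"
proof -
  have "sym_unit p q i j * Y i j
      = (if i = p \<and> j = q then Y p q / 2 else 0) + (if i = q \<and> j = p then Y q p / 2 else 0)" for i j
    by (simp add: sym_unit_def distrib_right if_distrib[of "\<lambda>t. t * Y i j"] cong: if_cong)
  then have "frob_r r (sym_unit p q) Y
      = (\<Sum>i<r. \<Sum>j<r. if i = p \<and> j = q then Y p q / 2 else 0)
        + (\<Sum>i<r. \<Sum>j<r. if i = q \<and> j = p then Y q p / 2 else 0)"
    by (simp add: frob_r_def sum.distrib)
  also have "\<dots> = Y p q / 2 + Y q p / 2"
    using assms(2,3) by (simp add: sum_sum_if_eq_pair)
  also have "\<dots> = Y p q"
    using assms unfolding symm_r_def by simp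
  finally show ?thesis .
qed

lemma psd_r_cong:
  assumes "\<And>p q. p < r \<Longrightarrow> q < r \<Longrightarrow> Y p q = Z p q"
  shows "psd_r r Y \<longleftrightarrow> psd_r r Z"
  unfolding psd_r_def symm_r_def using assms by simp

lemma psd_r_nonneg_combination:
  assumes "psd_r r Y" "psd_r r Z" "0 \<le> u" "0 \<le> w"
  shows "psd_r r (\<lambda>p q. u * Y p q + w * Z p q)"
  unfolding psd_r_def
proof (intro conjI allI)
  show "symm_r r (\<lambda>p q. u * Y p q + w * Z p q)"
    using assms(1,2) by (simp add: psd_r_def symm_r_def)
next
  fix v :: "nat \<Rightarrow> real"
  have "(\<Sum>i<r. \<Sum>j<r. v i * (u * Y i j + w * Z i j) * v j)
      = u * (\<Sum>i<r. \<Sum>j<r. v i * Y i j * v j) + w * (\<Sum>i<r. \<Sum>j<r. v i * Z i j * v j)"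
    by (simp add: sum.distrib sum_distrib_left algebra_simps)
  moreover have "0 \<le> (\<Sum>i<r. \<Sum>j<r. v i * Y i j * v j)" "0 \<le> (\<Sum>i<r. \<Sum>j<r. v i * Z i j * v j)"
    using assms(1,2) unfolding psd_r_def by blast+
  ultimately show "0 \<le> (\<Sum>i<r. \<Sum>j<r. v i * (u * Y i j + w * Z i j) * v j)"
    using assms(3,4) by simp
qed

definition affine_entries :: "(real^'n^'n \<Rightarrow> nat \<Rightarrow> nat \<Rightarrow> real) \<Rightarrow> bool" where
  "affine_entries M \<longleftrightarrow> (\<forall>p q. \<exists>c A. \<forall>x. M x p q = c + frob A x)"

lemma affine_entries_convex_combination:
  assumes "affine_entries M" "u + w = 1"
  shows "M (u *\<^sub>R x + w *\<^sub>R y) p q = u * M x p q + w * M y p q"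
proof -
  obtain c A where "\<forall>x. M x p q = c + frob A x"
    using assms(1) unfolding affine_entries_def by blast
  then have "M (u *\<^sub>R x + w *\<^sub>R y) p q = (u + w) * c + u * (A \<bullet> x) + w * (A \<bullet> y)"
    using assms(2) by (simp add: frob_eq_inner inner_add_right)
  with \<open>\<forall>x. M x p q = c + frob A x\<close> show ?thesis
    by (simp add: frob_eq_inner algebra_simps)
qed

lemma convex_psd_affine_preimage:
  assumes "affine_entries M"
  shows "convex {x. psd_r r (M x)}"
proof (rule convexI)
  fix x y and u w :: real
  assume "x \<in> {x. psd_r r (M x)}" "y \<in> {x. psd_r r (M x)}" "0 \<le> u" "0 \<le> w" "u + w = 1"
  have "M (u *\<^sub>R x + w *\<^sub>R y) = (\<lambda>p q. u * M x p q + w * M y p q)"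
    using affine_entries_convex_combination[OF assms \<open>u + w = 1\<close>] by (intro ext)
  moreover have "psd_r r (\<lambda>p q. u * M x p q + w * M y p q)"
    using \<open>x \<in> _\<close> \<open>y \<in> _\<close> \<open>0 \<le> u\<close> \<open>0 \<le> w\<close> by (intro psd_r_nonneg_combination) simp_all
  ultimately show "u *\<^sub>R x + w *\<^sub>R y \<in> {x. psd_r r (M x)}"
    by simp
qed

lemma all_less_square_iff:
  fixes r :: nat
  shows "(\<forall>c<r * r. P (c div r) (c mod r)) \<longleftrightarrow> (\<forall>p<r. \<forall>q<r. P p q)"
proof
  assume all: "\<forall>c<r * r. P (c div r) (c mod r)"
  show "\<forall>p<r. \<forall>q<r. P p q"
  proof (intro allI impI)
    fix p q assume "p < r" "q < r"
    then have "p * r + q < (p + 1) * r"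
      by simp
    also have "\<dots> \<le> r * r"
      using \<open>p < r\<close> by (intro mult_le_mono1) simp
    finally have "P ((p * r + q) div r) ((p * r + q) mod r)"
      using all by blast
    moreover have "(p * r + q) div r = p" "(p * r + q) mod r = q"
      using \<open>q < r\<close> by simp_all
    ultimately show "P p q"
      by simp
  qed
next
  assume all: "\<forall>p<r. \<forall>q<r. P p q"
  show "\<forall>c<r * r. P (c div r) (c mod r)"
  proof (intro allI impI)
    fix c assume "c < r * r"
    then have "0 < r"
      by (cases r) simp_all
    with \<open>c < r * r\<close> show "P (c div r) (c mod r)"
      using all less_mult_imp_div_less mod_less_divisor by blast
  qed
qed

lemma sdp_ef_psd_affine_preimage:
  assumes "affine_entries M"
  shows "sdp_ef {x. psd_r r (M x)} r"
proof -
  obtain C A where M: "\<And>x p q. M x p q = C p q + frob (A p q) x"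
    using assms unfolding affine_entries_def by metis
  \<comment> \<open>Constraint \<open>c\<close> fixes the entry \<open>(c div r, c mod r)\<close> of \<open>Y\<close>.\<close>
  define E where "E c = - A (c div r) (c mod r)" for c
  define F where "F c = sym_unit (c div r) (c mod r)" for c
  define h where "h c = C (c div r) (c mod r)" for c
  have constraints: "(\<forall>c<r * r. frob (E c) x + frob_r r (F c) Y = h c) \<longleftrightarrow>
      (\<forall>p<r. \<forall>q<r. Y p q = M x p q)" if "symm_r r Y" for x Y
    unfolding E_def F_def h_def all_less_square_iff[of r "\<lambda>p q. frob (- A p q) x + frob_r r (sym_unit p q) Y = C p q"]
    using that by (auto simp: frob_r_sym_unit M frob_eq_inner diff_eq_eq)
  have "psd_r r Y \<and> (\<forall>c<r * r. frob (E c) x + frob_r r (F c) Y = h c) \<longleftrightarrow>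
      psd_r r Y \<and> (\<forall>p<r. \<forall>q<r. Y p q = M x p q)" for x Y
    using constraints psd_r_def by blast
  moreover have "psd_r r (M x) \<longleftrightarrow> (\<exists>Y. psd_r r Y \<and> (\<forall>p<r. \<forall>q<r. Y p q = M x p q))" for x
    using psd_r_cong by blast
  ultimately have "x \<in> {x. psd_r r (M x)} \<longleftrightarrow>
      (\<exists>Y. psd_r r Y \<and> (\<forall>c<r * r. frob (E c) x + frob_r r (F c) Y = h c))" for x
    by simp
  moreover have "\<forall>c<r * r. symm_r r (F c)"
    by (simp add: F_def symm_r_sym_unit)
  ultimately show ?thesis
    unfolding sdp_ef_def by blast
qed

definition moment_matrix :: "(nat \<Rightarrow> 'n) \<Rightarrow> real^'n^'n \<Rightarrow> nat \<Rightarrow> nat \<Rightarrow> real" where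
  "moment_matrix g x p q = (case (p, q) of
      (0, 0) \<Rightarrow> 1
    | (0, Suc l) \<Rightarrow> x $ g l $ g l
    | (Suc k, 0) \<Rightarrow> x $ g k $ g k
    | (Suc k, Suc l) \<Rightarrow> (x $ g k $ g l + x $ g l $ g k) / 2)"

lemma symm_r_moment_matrix: "symm_r r (moment_matrix g x)"
  by (simp add: symm_r_def moment_matrix_def split: nat.split)

lemma affine_entries_moment_matrix: "affine_entries (moment_matrix g)"
  unfolding affine_entries_def
proof (intro allI)
  fix p q
  let ?e = "\<lambda>a b. axis a (axis b 1) :: real^'n^'n"
  have e: "frob (?e a b) x = x $ a $ b" for a b x
    by (simp add: frob_eq_inner inner_axis')
  show "\<exists>c A. \<forall>x. moment_matrix g x p q = c + frob A x"
  proof (cases p; cases q)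
    assume "p = 0" "q = 0"
    then show ?thesis
      by (intro exI[of _ 1] exI[of _ 0]) (simp add: moment_matrix_def frob_def)
  next
    fix l assume "p = 0" "q = Suc l"
    then show ?thesis
      by (intro exI[of _ 0] exI[of _ "?e (g l) (g l)"]) (simp add: moment_matrix_def e)
  next
    fix k assume "p = Suc k" "q = 0"
    then show ?thesis
      by (intro exI[of _ 0] exI[of _ "?e (g k) (g k)"]) (simp add: moment_matrix_def e)
  next
    fix k l assume "p = Suc k" "q = Suc l"
    then show ?thesis
      by (intro exI[of _ 0] exI[of _ "(1/2) *\<^sub>R (?e (g k) (g l) + ?e (g l) (g k))"])
        (simp add: moment_matrix_def frob_eq_inner inner_add_left inner_axis' add_divide_distrib)
  qed
qed

lemma quadratic_form_moment_matrix:
  "(\<Sum>i<Suc n. \<Sum>j<Suc n. v i * moment_matrix g x i j * v j)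
    = (v 0)\<^sup>2 + 2 * v 0 * (\<Sum>k<n. v (Suc k) * x $ g k $ g k)
      + (\<Sum>k<n. \<Sum>l<n. v (Suc k) * v (Suc l) * x $ g k $ g l)"
proof -
  have "(\<Sum>i<Suc n. \<Sum>j<Suc n. v i * moment_matrix g x i j * v j)
      = v 0 * v 0 + (\<Sum>l<n. v 0 * x $ g l $ g l * v (Suc l))
        + (\<Sum>k<n. v (Suc k) * x $ g k $ g k * v 0
           + (\<Sum>l<n. v (Suc k) * ((x $ g k $ g l + x $ g l $ g k) / 2) * v (Suc l)))"
    by (simp only: sum.lessThan_Suc_shift) (simp add: moment_matrix_def)
  also have "\<dots> = (v 0)\<^sup>2 + 2 * v 0 * (\<Sum>k<n. v (Suc k) * x $ g k $ g k)
      + ((\<Sum>k<n. \<Sum>l<n. v (Suc k) * v (Suc l) * x $ g k $ g l)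
         + (\<Sum>k<n. \<Sum>l<n. v (Suc k) * v (Suc l) * x $ g l $ g k)) / 2"
    by (simp add: sum.distrib sum_distrib_left sum_divide_distrib power2_eq_square algebra_simps
        add_divide_distrib)
  also have "(\<Sum>k<n. \<Sum>l<n. v (Suc k) * v (Suc l) * x $ g l $ g k)
      = (\<Sum>k<n. \<Sum>l<n. v (Suc k) * v (Suc l) * x $ g k $ g l)"
    by (subst sum.swap) (simp add: mult.commute)
  finally show ?thesis
    by simp
qed

lemma psd_moment_matrix_outer_binvec:
  assumes "b \<in> binvecs"
  shows "psd_r (Suc n) (moment_matrix g (\<chi> i j. b i * b j))"
  unfolding psd_r_def
proof (intro conjI allI)
  show "symm_r (Suc n) (moment_matrix g (\<chi> i j. b i * b j))"
    by (rule symm_r_moment_matrix)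
next
  fix v :: "nat \<Rightarrow> real"
  define t where "t = (\<Sum>k<n. v (Suc k) * b (g k))"
  have idem: "b i * b i = b i" for i
    using assms unfolding binvecs_def by force
  have "t\<^sup>2 = (\<Sum>k<n. \<Sum>l<n. v (Suc k) * v (Suc l) * (b (g k) * b (g l)))"
    unfolding t_def power2_eq_square sum_product by (simp add: algebra_simps)
  then have "(\<Sum>i<Suc n. \<Sum>j<Suc n. v i * moment_matrix g (\<chi> i j. b i * b j) i j * v j)
      = (v 0 + t)\<^sup>2"
    unfolding quadratic_form_moment_matrix by (simp add: idem t_def power2_sum)
  then show "0 \<le> (\<Sum>i<Suc n. \<Sum>j<Suc n. v i * moment_matrix g (\<chi> i j. b i * b j) i j * v j)"
    by simp
qed

lemma frob_Qset_matrix: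
  "frob (\<chi> i j. (if i = j then 2 * a i else 0) - a i * a j) x
    = 2 * (\<Sum>i\<in>UNIV. a i * x $ i $ i) - (\<Sum>i\<in>UNIV. \<Sum>j\<in>UNIV. a i * a j * x $ i $ j)"
  by (simp add: frob_def left_diff_distrib sum_subtractf if_distrib[of "\<lambda>t. t * _"]
      sum_distrib_left mult.assoc cong: if_cong)

lemma psd_moment_matrix_imp_Qset:
  assumes g: "bij_betw g {..<CARD('n)} (UNIV :: 'n::finite set)"
    and psd: "psd_r (Suc CARD('n)) (moment_matrix g x)"
  shows "x \<in> Qset"
  unfolding Qset_def
proof (intro CollectI ballI)
  fix a :: "'n \<Rightarrow> real"
  assume "a \<in> binvecs"
  have reindex: "(\<Sum>i\<in>UNIV. f i) = (\<Sum>k<CARD('n). f (g k))" for f :: "'n \<Rightarrow> real"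
    using sum.reindex_bij_betw[OF g, of f] by simp
  define v where "v p = (if p = 0 then 1 else - a (g (p - 1)))" for p
  have "0 \<le> (\<Sum>i<Suc CARD('n). \<Sum>j<Suc CARD('n). v i * moment_matrix g x i j * v j)"
    using psd unfolding psd_r_def by blast
  also have "\<dots> = 1 - 2 * (\<Sum>i\<in>UNIV. a i * x $ i $ i) + (\<Sum>i\<in>UNIV. \<Sum>j\<in>UNIV. a i * a j * x $ i $ j)"
    unfolding quadratic_form_moment_matrix reindex by (simp add: v_def sum_negf)
  finally show "frob (\<chi> i j. (if i = j then 2 * a i else 0) - a i * a j) x \<le> 1"
    unfolding frob_Qset_matrix by simp
qed

theorem lemma9:
  shows "\<exists>S :: (real^'n^'n) set. spectrahedron S \<and> COR \<subseteq> S \<and> S \<subseteq> Qset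
           \<and> xc_sdp S \<le> CARD('n) + 1"
proof -
  obtain g :: "nat \<Rightarrow> 'n" where g: "bij_betw g {..<CARD('n)} UNIV"
    using ex_bij_betw_nat_finite[of "UNIV :: 'n set"] by (auto simp: atLeast0LessThan)
  define S where "S = {x :: real^'n^'n. psd_r (Suc CARD('n)) (moment_matrix g x)}"
  have ef: "sdp_ef S (Suc CARD('n))"
    unfolding S_def by (intro sdp_ef_psd_affine_preimage affine_entries_moment_matrix)
  have "COR \<subseteq> S"
    unfolding COR_def S_def
    by (intro hull_minimal convex_psd_affine_preimage affine_entries_moment_matrix)
      (auto intro: psd_moment_matrix_outer_binvec)
  moreover have "S \<subseteq> Qset"
    unfolding S_def using psd_moment_matrix_imp_Qset[OF g] by blast
  moreover have "xc_sdp S \<le> CARD('n) + 1"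
    unfolding xc_sdp_def using Least_le[of "sdp_ef S", OF ef] by simp
  ultimately show ?thesis
    using ef unfolding spectrahedron_def by blast
qed

end
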